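(* Let $n\ge1$ and let $\mathcal{G}=(\mathcal{V},\mathcal{E})$ be the multigraph with vertex set $\mathcal{V}=\{0,\ldots,n\}$ and, for each $i\in\{1,\ldots,n\}$, exactly two parallel edges $e_i^{(0)},e_i^{(1)}$ between vertex $0$ and vertex $i$ (and no other edges). Let $\epsilon,\delta\ge0$ and $\alpha\ge0$, and let $\mathcal{A}$ be an algorithm that is $(\epsilon,\delta)$-differentially private on $\mathcal{G}$ and that on every input $w:\mathcal{E}\to\{0,1\}$ produces a spanning tree whose weight is in expectation at most $\alpha$ greater than the minimum spanning tree weight. Then there exists a $(2\epsilon,(1+e^{\epsilon})\delta)$-differentially private algorithm $\mathcal{B}$ which on every input $x\in\{0,1\}^n$ produces $y\in\{0,1\}^n$ such that the expected Hamming distance $d_H(x,y)$ is at most $\alpha$.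
   Context: Private edge weight model: for a graph $\mathcal{G}=(\mathcal{V},\mathcal{E})$, a weight function is $w:\mathcal{E}\to\mathbb{R}$. Two weight functions $w,w'$ are neighboring if $\sum_{e\in\mathcal{E}}|w(e)-w'(e)|\le1$. A randomized algorithm $\mathcal{A}$ on weight functions is $(\epsilon,\delta)$-differentially private on $\mathcal{G}$ if for all neighboring $w,w'$ and all sets $S$ of outputs, $\Pr[\mathcal{A}(w)\in S]\le e^{\epsilon}\Pr[\mathcal{A}(w')\in S]+\delta$. A randomized algorithm $\mathcal{B}$ with inputs in $\{0,1\}^n$ is $(\epsilon',\delta')$-differentially private if for all $x,x'\in\{0,1\}^n$ differing in exactly one coordinate and all sets $S$ of outputs, $\Pr[\mathcal{B}(x)\in S]\le e^{\epsilon'}\Pr[\mathcal{B}(x')\in S]+\delta'$. $d_H$ denotes Hamming distance. *)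

theory Defs
  imports "HOL-Probability.Probability"
begin

definition edge_rel :: "('e \<Rightarrow> 'v \<times> 'v) \<Rightarrow> 'e set \<Rightarrow> ('v \<times> 'v) set" where
  "edge_rel ends T = {ends e | e. e \<in> T} \<union> {prod.swap (ends e) | e. e \<in> T}"

(* A spanning tree of a finite connected multigraph: a set of |V|-1 edges connecting all
   vertices (equivalently a connected acyclic spanning edge set; parallel edges count as a cycle). *)
definition spanning_tree :: "'v set \<Rightarrow> 'e set \<Rightarrow> ('e \<Rightarrow> 'v \<times> 'v) \<Rightarrow> 'e set \<Rightarrow> bool" where
  "spanning_tree V E ends T \<longleftrightarrow> T \<subseteq> E \<and> finite T \<and> card T + 1 = card V \<and>
     (\<forall>u\<in>V. \<forall>v\<in>V. (u, v) \<in> (edge_rel ends T)\<^sup>*)"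

definition tree_weight :: "('e \<Rightarrow> real) \<Rightarrow> 'e set \<Rightarrow> real" where
  "tree_weight w T = (\<Sum>e\<in>T. w e)"

definition mst_weight :: "'v set \<Rightarrow> 'e set \<Rightarrow> ('e \<Rightarrow> 'v \<times> 'v) \<Rightarrow> ('e \<Rightarrow> real) \<Rightarrow> real" where
  "mst_weight V E ends w = Min {tree_weight w T | T. spanning_tree V E ends T}"

(* The specific multigraph: vertices {0..n}; edge (i,b) for i in {1..n}, b in {0,1}
   (b encoded as bool) joins vertex 0 and vertex i. *)
definition Gv :: "nat \<Rightarrow> nat set" where "Gv n = {0..n}"
definition Ge :: "nat \<Rightarrow> (nat \<times> bool) set" where "Ge n = {1..n} \<times> UNIV"
definition Gends :: "nat \<times> bool \<Rightarrow> nat \<times> nat" where "Gends e = (0, fst e)"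

definition weight_fun :: "'e set \<Rightarrow> ('e \<Rightarrow> real) \<Rightarrow> bool" where
  "weight_fun E w \<longleftrightarrow> (\<forall>e. e \<notin> E \<longrightarrow> w e = 0)"

definition neighboring_w :: "'e set \<Rightarrow> ('e \<Rightarrow> real) \<Rightarrow> ('e \<Rightarrow> real) \<Rightarrow> bool" where
  "neighboring_w E w w' \<longleftrightarrow> (\<Sum>e\<in>E. \<bar>w e - w' e\<bar>) \<le> 1"

definition dp_on_graph :: "'e set \<Rightarrow> (('e \<Rightarrow> real) \<Rightarrow> 'o pmf) \<Rightarrow> real \<Rightarrow> real \<Rightarrow> bool" where
  "dp_on_graph E A \<epsilon> \<delta> \<longleftrightarrow>
     (\<forall>w w' S. weight_fun E w \<longrightarrow> weight_fun E w' \<longrightarrow> neighboring_w E w w' \<longrightarrow>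
        measure_pmf.prob (A w) S \<le> exp \<epsilon> * measure_pmf.prob (A w') S + \<delta>)"

(* bit vectors {0,1}^n, indexed by {1..n}, False outside *)
definition bitvecs :: "nat \<Rightarrow> (nat \<Rightarrow> bool) set" where
  "bitvecs n = {x. \<forall>i. i \<notin> {1..n} \<longrightarrow> \<not> x i}"

definition hamming :: "nat \<Rightarrow> (nat \<Rightarrow> bool) \<Rightarrow> (nat \<Rightarrow> bool) \<Rightarrow> nat" where
  "hamming n x y = card {i\<in>{1..n}. x i \<noteq> y i}"

definition dp_bits :: "nat \<Rightarrow> ((nat \<Rightarrow> bool) \<Rightarrow> 'o pmf) \<Rightarrow> real \<Rightarrow> real \<Rightarrow> bool" where
  "dp_bits n B \<epsilon> \<delta> \<longleftrightarrow>
     (\<forall>x x' S. x \<in> bitvecs n \<longrightarrow> x' \<in> bitvecs n \<longrightarrow> hamming n x x' = 1 \<longrightarrow>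
        measure_pmf.prob (B x) S \<le> exp \<epsilon> * measure_pmf.prob (B x') S + \<delta>)"

end

theory Submission
  imports Defs
begin

text \<open>Encode a bit vector x as the 0/1 weight function that makes the edge e_i^(x_i) free
  and the other edge at i cost 1. A spanning tree must pick one edge at every vertex i, so
  decoding the tree by reading off which edge was picked costs at most the tree weight in
  Hamming distance, while the minimum spanning tree weight is 0. Bit vectors at Hamming
  distance one give weight functions at l1-distance two, which are linked through their
  midpoint by two applications of the privacy guarantee; decoding is post-processing.\<close>

definition bit_weight :: "nat \<Rightarrow> (nat \<Rightarrow> bool) \<Rightarrow> nat \<times> bool \<Rightarrow> real" where
  "bit_weight n x e = (if e \<in> Ge n \<and> snd e \<noteq> x (fst e) then 1 else 0)"

definition tree_bits :: "nat \<Rightarrow> (nat \<times> bool) set \<Rightarrow> nat \<Rightarrow> bool" where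
  "tree_bits n T = (\<lambda>i. i \<in> {1..n} \<and> (i, True) \<in> T)"

lemma finite_Ge: "finite (Ge n)"
  unfolding Ge_def by simp

lemma finite_spanning_trees:
  assumes "finite E"
  shows "finite {T. spanning_tree V E ends T}"
  using assms by (rule finite_subset[rotated, OF finite_Pow_iff[THEN iffD2]])
    (auto simp: spanning_tree_def)

lemma dp_on_graph_distance_two:
  assumes dp: "dp_on_graph E A \<epsilon> \<delta>"
    and w: "weight_fun E w" and w': "weight_fun E w'"
    and dist: "(\<Sum>e\<in>E. \<bar>w e - w' e\<bar>) \<le> 2"
  shows "measure_pmf.prob (A w) S
           \<le> exp (2 * \<epsilon>) * measure_pmf.prob (A w') S + (1 + exp \<epsilon>) * \<delta>"
proof -
  define m where "m = (\<lambda>e. (w e + w' e) / 2)"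
  have m: "weight_fun E m"
    using w w' unfolding m_def weight_fun_def by simp
  have half_dist: "\<bar>w e - m e\<bar> = \<bar>w e - w' e\<bar> / 2" "\<bar>m e - w' e\<bar> = \<bar>w e - w' e\<bar> / 2" for e
    unfolding m_def by (simp_all add: abs_if field_simps)
  have "neighboring_w E w m" "neighboring_w E m w'"
    using dist unfolding neighboring_w_def half_dist by (simp_all add: sum_divide_distrib[symmetric])
  then have p1: "measure_pmf.prob (A w) S \<le> exp \<epsilon> * measure_pmf.prob (A m) S + \<delta>"
    and p2: "measure_pmf.prob (A m) S \<le> exp \<epsilon> * measure_pmf.prob (A w') S + \<delta>"
    using dp w w' m unfolding dp_on_graph_def by blast+
  have "exp \<epsilon> * measure_pmf.prob (A m) S \<le> exp \<epsilon> * (exp \<epsilon> * measure_pmf.prob (A w') S + \<delta>)"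
    using p2 by simp
  with p1 have "measure_pmf.prob (A w) S \<le> exp \<epsilon> * (exp \<epsilon> * measure_pmf.prob (A w') S + \<delta>) + \<delta>"
    by linarith
  also have "\<dots> = exp (2 * \<epsilon>) * measure_pmf.prob (A w') S + (1 + exp \<epsilon>) * \<delta>"
    using mult_exp_exp[of \<epsilon> \<epsilon>] by (simp add: algebra_simps)
  finally show ?thesis .
qed

lemma weight_fun_bit_weight: "weight_fun (Ge n) (bit_weight n x)"
  unfolding weight_fun_def bit_weight_def by simp

lemma bit_weight_01: "bit_weight n x ` Ge n \<subseteq> {0, 1}"
  unfolding bit_weight_def by auto

lemma sum_abs_bit_weight_diff:
  "(\<Sum>e\<in>Ge n. \<bar>bit_weight n x e - bit_weight n x' e\<bar>) = 2 * real (hamming n x x')"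
proof -
  have inner: "(\<Sum>b\<in>UNIV. \<bar>bit_weight n x (i, b) - bit_weight n x' (i, b)\<bar>)
                 = (if x i \<noteq> x' i then 2 else 0)" if "i \<in> {1..n}" for i
    using that by (simp add: UNIV_bool bit_weight_def Ge_def)
  have "(\<Sum>e\<in>Ge n. \<bar>bit_weight n x e - bit_weight n x' e\<bar>)
          = (\<Sum>i\<in>{1..n}. \<Sum>b\<in>UNIV. \<bar>bit_weight n x (i, b) - bit_weight n x' (i, b)\<bar>)"
    unfolding Ge_def by (simp add: sum.cartesian_product split_def)
  also have "\<dots> = (\<Sum>i\<in>{1..n}. if x i \<noteq> x' i then 2 else 0)"
    using inner by (rule sum.cong[OF refl])
  also have "\<dots> = 2 * real (hamming n x x')"
    by (simp add: hamming_def sum.If_cases Int_def)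
  finally show ?thesis .
qed

lemma spanning_tree_Ge_edge_at:
  assumes "spanning_tree (Gv n) (Ge n) Gends T" and i: "i \<in> {1..n}"
  obtains b where "(i, b) \<in> T"
proof -
  have "(0, i) \<in> (edge_rel Gends T)\<^sup>*"
    using assms unfolding spanning_tree_def Gv_def by auto
  moreover have "i \<noteq> 0"
    using i by simp
  ultimately obtain a where "(a, i) \<in> edge_rel Gends T"
    by (blast elim: rtranclE)
  then obtain e where "e \<in> T" "(a, i) = Gends e \<or> (a, i) = prod.swap (Gends e)"
    unfolding edge_rel_def by blast
  with \<open>i \<noteq> 0\<close> have "(i, snd e) \<in> T"
    unfolding Gends_def by (cases e) auto
  then show thesis
    by (rule that)
qed

text \<open>Each vertex i where the decoded bit is wrong forces the costly edge (i, \<not> x i) into T.\<close>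

lemma hamming_tree_bits_le_tree_weight:
  assumes T: "spanning_tree (Gv n) (Ge n) Gends T"
  shows "real (hamming n x (tree_bits n T)) \<le> tree_weight (bit_weight n x) T"
proof -
  have TG: "T \<subseteq> Ge n" "finite T"
    using T unfolding spanning_tree_def by auto
  define D where "D = {i\<in>{1..n}. x i \<noteq> tree_bits n T i}"
  define C where "C = {e\<in>T. bit_weight n x e = 1}"
  have "(\<lambda>i. (i, \<not> x i)) ` D \<subseteq> C"
  proof
    fix e assume "e \<in> (\<lambda>i. (i, \<not> x i)) ` D"
    then obtain i where i: "i \<in> D" "e = (i, \<not> x i)" by auto
    then have "i \<in> {1..n}" unfolding D_def by simp
    then obtain b where "(i, b) \<in> T"
      using spanning_tree_Ge_edge_at[OF T] by blast
    moreover have "(i, True) \<in> T \<longleftrightarrow> \<not> x i"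
      using i unfolding D_def tree_bits_def by auto
    ultimately have "e \<in> T"
      using i(2) by (cases b) auto
    with TG i show "e \<in> C"
      unfolding C_def bit_weight_def by auto
  qed
  then have "card ((\<lambda>i. (i, \<not> x i)) ` D) \<le> card C"
    using TG by (intro card_mono) (auto simp: C_def)
  moreover have "card ((\<lambda>i. (i, \<not> x i)) ` D) = card D"
    by (rule card_image) (rule inj_onI, simp)
  ultimately have "card D \<le> card C"
    by simp
  also have "real (card C) = (\<Sum>e\<in>C. bit_weight n x e)"
    unfolding C_def by simp
  also have "\<dots> \<le> (\<Sum>e\<in>T. bit_weight n x e)"
    using TG by (intro sum_mono2) (auto simp: C_def bit_weight_def)
  finally show ?thesis
    unfolding hamming_def tree_weight_def D_def by simp
qed

lemma spanning_tree_of_bits: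
  "spanning_tree (Gv n) (Ge n) Gends ((\<lambda>i. (i, x i)) ` {1..n})"
proof -
  let ?T = "(\<lambda>i. (i, x i)) ` {1..n}"
  have hub: "(0, v) \<in> (edge_rel Gends ?T)\<^sup>* \<and> (v, 0) \<in> (edge_rel Gends ?T)\<^sup>*"
    if "v \<in> {0..n}" for v
  proof (cases "v = 0")
    case False
    with that have "(0, v) \<in> edge_rel Gends ?T" "(v, 0) \<in> edge_rel Gends ?T"
      unfolding edge_rel_def Gends_def by force+
    then show ?thesis by auto
  qed simp
  then have "\<forall>u\<in>{0..n}. \<forall>v\<in>{0..n}. (u, v) \<in> (edge_rel Gends ?T)\<^sup>*"
    by (meson rtrancl_trans)
  moreover have "card ?T = n"
    by (subst card_image) (auto intro: inj_onI)
  ultimately show ?thesis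
    unfolding spanning_tree_def Gv_def Ge_def by auto
qed

lemma mst_weight_bit_weight: "mst_weight (Gv n) (Ge n) Gends (bit_weight n x) \<le> 0"
proof -
  let ?T = "(\<lambda>i. (i, x i)) ` {1..n}"
  have "tree_weight (bit_weight n x) ?T = 0"
    unfolding tree_weight_def bit_weight_def by (auto intro!: sum.neutral)
  moreover have "finite {tree_weight (bit_weight n x) T | T. spanning_tree (Gv n) (Ge n) Gends T}"
    unfolding setcompr_eq_image by (intro finite_imageI finite_spanning_trees finite_Ge)
  ultimately show ?thesis
    unfolding mst_weight_def using spanning_tree_of_bits by (force intro: Min_le)
qed

theorem lemmaB2:
  fixes n :: nat and \<epsilon> \<delta> \<alpha> :: real
    and A :: "(nat \<times> bool \<Rightarrow> real) \<Rightarrow> (nat \<times> bool) set pmf"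
  assumes "n \<ge> 1" and "\<epsilon> \<ge> 0" and "\<delta> \<ge> 0" and "\<alpha> \<ge> 0"
    and "dp_on_graph (Ge n) A \<epsilon> \<delta>"
    and "\<And>w. weight_fun (Ge n) w \<Longrightarrow> w ` Ge n \<subseteq> {0, 1} \<Longrightarrow>
            (\<forall>T\<in>set_pmf (A w). spanning_tree (Gv n) (Ge n) Gends T) \<and>
            measure_pmf.expectation (A w) (tree_weight w)
              \<le> mst_weight (Gv n) (Ge n) Gends w + \<alpha>"
  shows "\<exists>B :: (nat \<Rightarrow> bool) \<Rightarrow> (nat \<Rightarrow> bool) pmf.
           dp_bits n B (2 * \<epsilon>) ((1 + exp \<epsilon>) * \<delta>) \<and>
           (\<forall>x\<in>bitvecs n. set_pmf (B x) \<subseteq> bitvecs n \<and>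
              measure_pmf.expectation (B x) (\<lambda>y. real (hamming n x y)) \<le> \<alpha>)"
proof -
  define B where "B x = map_pmf (tree_bits n) (A (bit_weight n x))" for x
  note A_good = assms(6)[OF weight_fun_bit_weight bit_weight_01]
  have "dp_bits n B (2 * \<epsilon>) ((1 + exp \<epsilon>) * \<delta>)"
    unfolding dp_bits_def B_def measure_map_pmf
    using dp_on_graph_distance_two[OF assms(5) weight_fun_bit_weight weight_fun_bit_weight]
    by (simp add: sum_abs_bit_weight_diff)
  moreover have "set_pmf (B x) \<subseteq> bitvecs n" for x
    unfolding B_def bitvecs_def tree_bits_def by auto
  moreover have "measure_pmf.expectation (B x) (\<lambda>y. real (hamming n x y)) \<le> \<alpha>" for x
  proof -
    have "set_pmf (A (bit_weight n x)) \<subseteq> {T. spanning_tree (Gv n) (Ge n) Gends T}"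
      using A_good by blast
    then have "finite (set_pmf (A (bit_weight n x)))"
      using finite_spanning_trees[OF finite_Ge] by (rule finite_subset)
    then have "measure_pmf.expectation (B x) (\<lambda>y. real (hamming n x y))
                 \<le> measure_pmf.expectation (A (bit_weight n x)) (tree_weight (bit_weight n x))"
      unfolding B_def integral_map_pmf
      by (intro integral_mono_AE integrable_measure_pmf_finite AE_pmfI
          hamming_tree_bits_le_tree_weight) (use A_good in blast)+
    also have "\<dots> \<le> \<alpha>"
      using A_good mst_weight_bit_weight by (meson add_le_same_cancel2 order_trans)
    finally show ?thesis .
  qed
  ultimately show ?thesis
    by (intro exI[of _ B] conjI ballI)
qed

end
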